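(* Let $R$ be a nonempty set of reward functions $r':\mathcal{S}\times\mathcal{A}\to\mathbb{R}$ and define $$R^*(R)=\Big\{\,r^*:\mathcal{S}\times\mathcal{A}\to\mathbb{R}\ :\ \sum_{a\in\mathcal{A}}e^{r^*(s,a)-r'(s,a)}\le1\ \text{for all } s\in\mathcal{S},\ r'\in R\Big\}.$$ Then for every $r^*\in R^*(R)$ and every $\pi\in\Pi$, $$J(\pi,r^* )\le\inf_{r'\in R}\mathbb{E}_\pi\Big[\sum_{t=1}^T r'(s_t,a_t)\Big].$$
   Context: Finite-horizon MDP: finite state set $\mathcal{S}$, finite action set $\mathcal{A}$, horizon $T\ge1$, initial distribution $p_1$, transition kernel $p(s'\mid s,a)$. $\Pi$ is the set of Markov (possibly time-dependent) policies $\pi=(\pi_t(\cdot\mid s))_{t=1}^T$, with $\pi(a_t\mid s_t)$ meaning $\pi_t(a_t\mid s_t)$; $\mathbb{E}_\pi$ is expectation over trajectories generated by $\pi$. The MaxEnt RL objective is $J(\pi,r)=\mathbb{E}_\pi[\sum_{t=1}^T r(s_t,a_t)]+\mathcal{H}_\pi[a\mid s]$ with $\mathcal{H}_\pi[a\mid s]=\mathbb{E}_\pi[-\sum_{t=1}^T\log\pi(a_t\mid s_t)]$. *)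

theory Defs
  imports "HOL-Library.FuncSet" Complex_Main
begin

text \<open>Initial distribution p1 s, transition kernel p s a s' = p(s'|s,a),
  Markov policy pi t s a = pi_t(a|s) for t in 1..T.
  A trajectory is a function tau with tau t = (s_t, a_t) for t in 1..T
  (undefined elsewhere, extensional).\<close>

definition valid_mdp :: "('s::finite \<Rightarrow> real) \<Rightarrow> ('s \<Rightarrow> 'a::finite \<Rightarrow> 's \<Rightarrow> real) \<Rightarrow> bool" where
  "valid_mdp p1 p \<longleftrightarrow>
     (\<forall>s. p1 s \<ge> 0) \<and> (\<Sum>s\<in>UNIV. p1 s) = 1 \<and>
     (\<forall>s a s'. p s a s' \<ge> 0) \<and> (\<forall>s a. (\<Sum>s'\<in>UNIV. p s a s') = 1)"

definition policies :: "nat \<Rightarrow> (nat \<Rightarrow> 's::finite \<Rightarrow> 'a::finite \<Rightarrow> real) set" where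
  "policies T = {\<pi>. \<forall>t\<in>{1..T}. \<forall>s. (\<forall>a. \<pi> t s a \<ge> 0) \<and> (\<Sum>a\<in>UNIV. \<pi> t s a) = 1}"

definition trajectories :: "nat \<Rightarrow> (nat \<Rightarrow> 's::finite \<times> 'a::finite) set" where
  "trajectories T = {1..T} \<rightarrow>\<^sub>E UNIV"

definition traj_prob :: "nat \<Rightarrow> ('s::finite \<Rightarrow> real) \<Rightarrow> ('s \<Rightarrow> 'a::finite \<Rightarrow> 's \<Rightarrow> real)
    \<Rightarrow> (nat \<Rightarrow> 's \<Rightarrow> 'a \<Rightarrow> real) \<Rightarrow> (nat \<Rightarrow> 's \<times> 'a) \<Rightarrow> real" where
  "traj_prob T p1 p \<pi> \<tau> =
     p1 (fst (\<tau> 1))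
     * (\<Prod>t\<in>{1..T}. \<pi> t (fst (\<tau> t)) (snd (\<tau> t)))
     * (\<Prod>t\<in>{1..<T}. p (fst (\<tau> t)) (snd (\<tau> t)) (fst (\<tau> (Suc t))))"

definition traj_expect :: "nat \<Rightarrow> ('s::finite \<Rightarrow> real) \<Rightarrow> ('s \<Rightarrow> 'a::finite \<Rightarrow> 's \<Rightarrow> real)
    \<Rightarrow> (nat \<Rightarrow> 's \<Rightarrow> 'a \<Rightarrow> real) \<Rightarrow> ((nat \<Rightarrow> 's \<times> 'a) \<Rightarrow> real) \<Rightarrow> real" where
  "traj_expect T p1 p \<pi> g = (\<Sum>\<tau>\<in>trajectories T. traj_prob T p1 p \<pi> \<tau> * g \<tau>)"

definition expected_return :: "nat \<Rightarrow> ('s::finite \<Rightarrow> real) \<Rightarrow> ('s \<Rightarrow> 'a::finite \<Rightarrow> 's \<Rightarrow> real)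
    \<Rightarrow> (nat \<Rightarrow> 's \<Rightarrow> 'a \<Rightarrow> real) \<Rightarrow> ('s \<Rightarrow> 'a \<Rightarrow> real) \<Rightarrow> real" where
  "expected_return T p1 p \<pi> r =
     traj_expect T p1 p \<pi> (\<lambda>\<tau>. \<Sum>t=1..T. r (fst (\<tau> t)) (snd (\<tau> t)))"

definition causal_entropy :: "nat \<Rightarrow> ('s::finite \<Rightarrow> real) \<Rightarrow> ('s \<Rightarrow> 'a::finite \<Rightarrow> 's \<Rightarrow> real)
    \<Rightarrow> (nat \<Rightarrow> 's \<Rightarrow> 'a \<Rightarrow> real) \<Rightarrow> real" where
  "causal_entropy T p1 p \<pi> =
     traj_expect T p1 p \<pi> (\<lambda>\<tau>. - (\<Sum>t=1..T. ln (\<pi> t (fst (\<tau> t)) (snd (\<tau> t)))))"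

definition maxent_J :: "nat \<Rightarrow> ('s::finite \<Rightarrow> real) \<Rightarrow> ('s \<Rightarrow> 'a::finite \<Rightarrow> 's \<Rightarrow> real)
    \<Rightarrow> (nat \<Rightarrow> 's \<Rightarrow> 'a \<Rightarrow> real) \<Rightarrow> ('s \<Rightarrow> 'a \<Rightarrow> real) \<Rightarrow> real" where
  "maxent_J T p1 p \<pi> r = expected_return T p1 p \<pi> r + causal_entropy T p1 p \<pi>"

definition Rstar :: "('s::finite \<Rightarrow> 'a::finite \<Rightarrow> real) set \<Rightarrow> ('s \<Rightarrow> 'a \<Rightarrow> real) set" where
  "Rstar R = {rs. \<forall>s. \<forall>r'\<in>R. (\<Sum>a\<in>UNIV. exp (rs s a - r' s a)) \<le> 1}"

end

theory Submission
  imports Defs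
begin

text \<open>Writing \<open>h\<^sub>t = r\<^sup>* - r' - ln \<pi>\<^sub>t\<close>, the gap \<open>J(\<pi>, r\<^sup>*) - E\<^sub>\<pi>[\<Sum>\<^sub>t r'(s\<^sub>t, a\<^sub>t)]\<close> is the
  expectation of \<open>\<Sum>\<^sub>t h\<^sub>t(s\<^sub>t, a\<^sub>t)\<close>. By Gibbs' inequality \<open>q (x - ln q) \<le> exp x - q\<close>, the
  conditional mean \<open>\<Sum>\<^sub>a \<pi>\<^sub>t(a|s) h\<^sub>t(s, a)\<close> is at most \<open>\<Sum>\<^sub>a exp (r\<^sup>*(s,a) - r'(s,a)) - 1 \<le> 0\<close>
  in every state, and unfolding the trajectory distribution one step at a time shows that
  a sum of terms with nonpositive conditional means has nonpositive expectation.\<close>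

lemma mult_diff_ln_le_exp_diff:
  fixes q x :: real
  assumes "q \<ge> 0"
  shows "q * (x - ln q) \<le> exp x - q"
proof (cases "q = 0")
  case False
  then have q: "q > 0" using assms by simp
  have "x - ln q = ln (exp x / q)" using q by (simp add: ln_div)
  also have "\<dots> \<le> exp x / q - 1" using q by (intro ln_le_minus_one) simp
  finally have "q * (x - ln q) \<le> q * (exp x / q - 1)" using q by (simp add: mult_left_mono)
  also have "\<dots> = exp x - q" using q by (simp add: algebra_simps)
  finally show ?thesis .
qed simp

lemma sum_mult_diff_ln_le_sum_exp:
  fixes q x :: "'a \<Rightarrow> real"
  assumes "\<And>a. a \<in> A \<Longrightarrow> q a \<ge> 0" and "(\<Sum>a\<in>A. q a) = 1"
  shows "(\<Sum>a\<in>A. q a * (x a - ln (q a))) \<le> (\<Sum>a\<in>A. exp (x a)) - 1"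
proof -
  have "(\<Sum>a\<in>A. q a * (x a - ln (q a))) \<le> (\<Sum>a\<in>A. exp (x a) - q a)"
    using assms(1) by (intro sum_mono mult_diff_ln_le_exp_diff)
  then show ?thesis by (simp add: sum_subtractf assms(2))
qed

lemma sum_trajectories_Suc:
  "(\<Sum>\<tau>\<in>trajectories (Suc T). F \<tau>) =
   (\<Sum>\<tau>\<in>(trajectories T :: (nat \<Rightarrow> 's::finite \<times> 'a::finite) set). \<Sum>x\<in>UNIV. F (\<tau>(Suc T := x)))"
proof -
  let ?ext = "\<lambda>(x, \<tau>). \<tau>(Suc T := x)"
  have interval: "{1..Suc T} = insert (Suc T) {1..T}" by auto
  have image: "trajectories (Suc T) = ?ext ` (UNIV \<times> (trajectories T :: (nat \<Rightarrow> 's \<times> 'a) set))"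
    unfolding trajectories_def interval PiE_insert_eq by simp
  have "inj_on ?ext (UNIV \<times> (trajectories T :: (nat \<Rightarrow> 's \<times> 'a) set))"
    unfolding trajectories_def using inj_combinator[of "Suc T" "{1..T}" "\<lambda>_. UNIV"] by simp
  then have "(\<Sum>\<tau>\<in>trajectories (Suc T). F \<tau>) = (\<Sum>x\<in>UNIV. \<Sum>\<tau>\<in>trajectories T. F (\<tau>(Suc T := x)))"
    by (simp add: image sum.reindex case_prod_unfold sum.cartesian_product)
  then show ?thesis by (simp add: sum.swap[of _ UNIV])
qed

lemma sum_UNIV_prod:
  "(\<Sum>x\<in>(UNIV :: ('s::finite \<times> 'a::finite) set). f x) = (\<Sum>s\<in>UNIV. \<Sum>a\<in>UNIV. f (s, a))"
  by (simp add: UNIV_Times_UNIV[symmetric] sum.cartesian_product del: UNIV_Times_UNIV)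

lemma traj_expect_one:
  fixes F :: "(nat \<Rightarrow> 's::finite \<times> 'a::finite) \<Rightarrow> real"
  shows "traj_expect 1 p1 p \<pi> F =
   (\<Sum>s\<in>UNIV. p1 s * (\<Sum>a\<in>UNIV. \<pi> 1 s a * F ((\<lambda>_. undefined)(1 := (s, a)))))"
proof -
  have "(trajectories 0 :: (nat \<Rightarrow> 's \<times> 'a) set) = {\<lambda>_. undefined}"
    by (simp add: trajectories_def)
  then show ?thesis
    unfolding traj_expect_def One_nat_def sum_trajectories_Suc
    by (simp add: traj_prob_def sum_UNIV_prod sum_distrib_left mult.assoc fun_upd_def)
qed

lemma traj_expect_Suc:
  assumes "T \<ge> 1"
  shows "traj_expect (Suc T) p1 p \<pi> F =
    traj_expect T p1 p \<pi> (\<lambda>\<tau>. \<Sum>s\<in>UNIV. p (fst (\<tau> T)) (snd (\<tau> T)) s *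
      (\<Sum>a\<in>UNIV. \<pi> (Suc T) s a * F (\<tau>(Suc T := (s, a)))))"
proof -
  have "traj_prob (Suc T) p1 p \<pi> (\<tau>(Suc T := (s, a))) =
        traj_prob T p1 p \<pi> \<tau> * (p (fst (\<tau> T)) (snd (\<tau> T)) s * \<pi> (Suc T) s a)" for \<tau> s a
    using assms by (simp add: traj_prob_def prod.nat_ivl_Suc' prod.atLeastLessThan_Suc)
  then show ?thesis
    unfolding traj_expect_def sum_trajectories_Suc sum_UNIV_prod
    by (simp add: sum_distrib_left mult.assoc mult.left_commute)
qed

lemma traj_prob_nonneg:
  assumes "valid_mdp p1 p" and "\<pi> \<in> policies T"
  shows "traj_prob T p1 p \<pi> \<tau> \<ge> 0"
  using assms unfolding valid_mdp_def policies_def traj_prob_def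
  by (intro mult_nonneg_nonneg prod_nonneg) auto

lemma traj_expect_mono:
  assumes "valid_mdp p1 p" and "\<pi> \<in> policies T"
    and "\<And>\<tau>. \<tau> \<in> trajectories T \<Longrightarrow> F \<tau> \<le> G \<tau>"
  shows "traj_expect T p1 p \<pi> F \<le> traj_expect T p1 p \<pi> G"
  unfolding traj_expect_def
  using assms traj_prob_nonneg by (intro sum_mono mult_left_mono) auto

lemma traj_expect_add:
  "traj_expect T p1 p \<pi> (\<lambda>\<tau>. F \<tau> + G \<tau>) = traj_expect T p1 p \<pi> F + traj_expect T p1 p \<pi> G"
  unfolding traj_expect_def by (simp add: distrib_left sum.distrib)

lemma policies_SucD:
  "\<pi> \<in> policies (Suc T) \<Longrightarrow> \<pi> \<in> policies T"
  unfolding policies_def by auto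

lemma traj_expect_stepwise_nonpos:
  fixes p1 :: "'s::finite \<Rightarrow> real" and p :: "'s \<Rightarrow> 'a::finite \<Rightarrow> 's \<Rightarrow> real"
    and h :: "nat \<Rightarrow> 's \<Rightarrow> 'a \<Rightarrow> real"
  assumes "T \<ge> 1" and mdp: "valid_mdp p1 p" and "\<pi> \<in> policies T"
    and "\<And>t s. t \<in> {1..T} \<Longrightarrow> (\<Sum>a\<in>UNIV. \<pi> t s a * h t s a) \<le> 0"
  shows "traj_expect T p1 p \<pi> (\<lambda>\<tau>. \<Sum>t=1..T. h t (fst (\<tau> t)) (snd (\<tau> t))) \<le> 0"
  using assms(1,3,4)
proof (induction T rule: dec_induct)
  case base
  have "\<And>s. p1 s \<ge> 0" using mdp by (simp add: valid_mdp_def)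
  then show ?case
    unfolding traj_expect_one using base.prems(2)[of 1]
    by (simp add: sum_nonpos mult_nonneg_nonpos)
next
  case (step T)
  define G where "G \<tau> = (\<Sum>t=1..T. h t (fst (\<tau> t)) (snd (\<tau> t)))" for \<tau> :: "nat \<Rightarrow> 's \<times> 'a"
  let ?q = "\<lambda>\<tau> s. p (fst (\<tau> T)) (snd (\<tau> T)) s"
  have kernel: "?q \<tau> s \<ge> 0" "(\<Sum>s\<in>UNIV. ?q \<tau> s) = 1" for \<tau> s
    using mdp by (auto simp: valid_mdp_def)
  have policy: "\<pi> (Suc T) s a \<ge> 0" "(\<Sum>a\<in>UNIV. \<pi> (Suc T) s a) = 1" for s a
    using step.prems(1) by (auto simp: policies_def)
  have last_step: "(\<Sum>s\<in>UNIV. ?q \<tau> s * (\<Sum>a\<in>UNIV. \<pi> (Suc T) s a * h (Suc T) s a)) \<le> 0" for \<tau>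
    by (simp add: sum_nonpos mult_nonneg_nonpos kernel(1) step.prems(2))
  have mean: "(\<Sum>s\<in>UNIV. ?q \<tau> s * (\<Sum>a\<in>UNIV. \<pi> (Suc T) s a * (G \<tau> + h (Suc T) s a)))
      = G \<tau> + (\<Sum>s\<in>UNIV. ?q \<tau> s * (\<Sum>a\<in>UNIV. \<pi> (Suc T) s a * h (Suc T) s a))" for \<tau>
    by (simp add: distrib_left sum.distrib sum_distrib_right[symmetric] policy kernel
        mult.commute[of _ "G \<tau>"] sum_distrib_left[of "G \<tau>", symmetric])
  have extend: "(\<Sum>t=1..Suc T. h t (fst ((\<tau>(Suc T := (s, a))) t)) (snd ((\<tau>(Suc T := (s, a))) t)))
      = G \<tau> + h (Suc T) s a" for \<tau> s a
    by (simp add: sum.nat_ivl_Suc' G_def)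
  have "traj_expect (Suc T) p1 p \<pi> (\<lambda>\<tau>. \<Sum>t=1..Suc T. h t (fst (\<tau> t)) (snd (\<tau> t)))
      = traj_expect T p1 p \<pi> (\<lambda>\<tau>. G \<tau> + (\<Sum>s\<in>UNIV. ?q \<tau> s * (\<Sum>a\<in>UNIV. \<pi> (Suc T) s a * h (Suc T) s a)))"
    unfolding traj_expect_Suc[OF step.hyps(1)] extend mean ..
  also have "\<dots> \<le> traj_expect T p1 p \<pi> G"
    using last_step by (intro traj_expect_mono[OF mdp policies_SucD[OF step.prems(1)]]) simp
  also have "\<dots> \<le> 0"
    unfolding G_def using step.prems(2) by (intro step.IH[OF policies_SucD[OF step.prems(1)]]) auto
  finally show ?case .
qed

theorem corollary3:
  fixes T :: nat
    and p1 :: "'s::finite \<Rightarrow> real"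
    and p :: "'s \<Rightarrow> 'a::finite \<Rightarrow> 's \<Rightarrow> real"
    and R :: "('s \<Rightarrow> 'a \<Rightarrow> real) set"
    and rs :: "'s \<Rightarrow> 'a \<Rightarrow> real"
    and \<pi> :: "nat \<Rightarrow> 's \<Rightarrow> 'a \<Rightarrow> real"
  assumes "T \<ge> 1"
    and "valid_mdp p1 p"
    and "R \<noteq> {}"
    and "rs \<in> Rstar R"
    and "\<pi> \<in> policies T"
  shows "maxent_J T p1 p \<pi> rs \<le> (INF r'\<in>R. expected_return T p1 p \<pi> r')"
proof (rule cINF_greatest[OF assms(3)])
  fix r' assume "r' \<in> R"
  define h where "h t s a = rs s a - r' s a - ln (\<pi> t s a)" for t s a
  have "(\<Sum>a\<in>UNIV. \<pi> t s a * h t s a) \<le> 0" if "t \<in> {1..T}" for t s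
  proof -
    have "(\<Sum>a\<in>UNIV. \<pi> t s a * h t s a) \<le> (\<Sum>a\<in>UNIV. exp (rs s a - r' s a)) - 1"
      unfolding h_def using assms(5) that
      by (intro sum_mult_diff_ln_le_sum_exp) (auto simp: policies_def)
    also have "\<dots> \<le> 0" using assms(4) \<open>r' \<in> R\<close> by (simp add: Rstar_def)
    finally show ?thesis .
  qed
  then have gap: "traj_expect T p1 p \<pi> (\<lambda>\<tau>. \<Sum>t=1..T. h t (fst (\<tau> t)) (snd (\<tau> t))) \<le> 0"
    using assms(1,2,5) by (intro traj_expect_stepwise_nonpos) auto
  have "maxent_J T p1 p \<pi> rs = expected_return T p1 p \<pi> r'
      + traj_expect T p1 p \<pi> (\<lambda>\<tau>. \<Sum>t=1..T. h t (fst (\<tau> t)) (snd (\<tau> t)))"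
    unfolding maxent_J_def expected_return_def causal_entropy_def traj_expect_add[symmetric]
    unfolding traj_expect_def h_def
    by (simp add: sum_subtractf sum.distrib algebra_simps sum_distrib_left)
  with gap show "maxent_J T p1 p \<pi> rs \<le> expected_return T p1 p \<pi> r'" by simp
qed

end
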